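(* Let $A,A'\in\mathbb{C}^{n\times n}$ with $\|A\|_F=\|A'\|_F=1$, let $v,v'\in\mathbb{C}^n$ be nonzero, and let $\lambda,\lambda'\in\mathbb{C}$ with $Av=\lambda v$. Suppose $\mu(A,\lambda,v)\big(\|A'-A\|_F+|\lambda'-\lambda|+d_{\mathbb{P}}(v',v)\big)\le\frac{\varepsilon}{7.2}$ for some $0<\varepsilon\le0.37$. Then $\frac1{1+\varepsilon}\mu(A,\lambda,v)\le\mu(A',\lambda',v')\le(1+\varepsilon)\mu(A,\lambda,v)$.
   Context: $\|\cdot\|_F$ is the Frobenius norm. $d_{\mathbb{P}}(v,v')=\arccos(|\langle v,v'\rangle|/(\|v\|\|v'\|))$. For $v\ne0$, $T_v=v^\perp$, $P_{v^\perp}$ the orthogonal projection onto $T_v$, $A_{\lambda,v}=P_{v^\perp}(A-\lambda\mathrm{Id})|_{T_v}$, and $\mu(A,\lambda,v)=\|A\|_F\|A_{\lambda,v}^{-1}\|$ (operator norm; $\infty$ if not invertible). *)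

theory Defs
  imports "HOL-Analysis.Analysis" "HOL-Library.Extended_Real"
begin

definition cinner :: "complex ^ 'n \<Rightarrow> complex ^ 'n \<Rightarrow> complex" where
  "cinner x y = (\<Sum>i\<in>UNIV. x $ i * cnj (y $ i))"

definition frob :: "complex ^ 'n ^ 'n \<Rightarrow> real" where
  "frob A = sqrt (\<Sum>i\<in>UNIV. \<Sum>j\<in>UNIV. (cmod (A $ i $ j))\<^sup>2)"

definition dP :: "complex ^ 'n \<Rightarrow> complex ^ 'n \<Rightarrow> real" where
  "dP v v' = arccos (cmod (cinner v v') / (norm v * norm v'))"

definition tangent :: "complex ^ 'n \<Rightarrow> (complex ^ 'n) set" where
  "tangent v = {x. cinner x v = 0}"

definition proj_perp :: "complex ^ 'n \<Rightarrow> complex ^ 'n \<Rightarrow> complex ^ 'n" where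
  "proj_perp v x = x - (cinner x v / cinner v v) *s v"

text \<open>A_{lambda,v} as a map (to be considered on tangent v).\<close>
definition Alv :: "complex ^ 'n ^ 'n \<Rightarrow> complex \<Rightarrow> complex ^ 'n \<Rightarrow> complex ^ 'n \<Rightarrow> complex ^ 'n" where
  "Alv A l v x = proj_perp v (A *v x - l *s x)"

text \<open>Operator norm of the inverse of A_{lambda,v} on T_v (infinity if not invertible),
  in the extended reals; on the zero space the operator norm is 0.\<close>
definition inv_opnorm :: "complex ^ 'n ^ 'n \<Rightarrow> complex \<Rightarrow> complex ^ 'n \<Rightarrow> ereal" where
  "inv_opnorm A l v =
    (if bij_betw (Alv A l v) (tangent v) (tangent v)
     then Sup ({0} \<union> {ereal (norm (inv_into (tangent v) (Alv A l v) y) / norm y) | y.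
                         y \<in> tangent v \<and> y \<noteq> 0})
     else \<infinity>)"

definition mu :: "complex ^ 'n ^ 'n \<Rightarrow> complex \<Rightarrow> complex ^ 'n \<Rightarrow> ereal" where
  "mu A l v = ereal (frob A) * inv_opnorm A l v"

end

theory Submission
  imports Defs
begin

text \<open>Write s = sin d_P(v',v) and t = \<mu>(A,\<lambda>,v) (|A'-A|_F + |\<lambda>'-\<lambda>| + d_P(v',v)). For x in T_v' its
  projection z = P_v x onto T_v satisfies (1 - s)|x| \<le> |z|, and since A - \<lambda> annihilates the
  v-component of x, |A_{\<lambda>,v} z| exceeds |A'_{\<lambda>',v'} x| by at most (|A'-A|_F + |\<lambda>'-\<lambda>| + O(s))|x|;
  with |z| \<le> \<parallel>A_{\<lambda>,v}^{-1}\<parallel> |A_{\<lambda>,v} z| this bounds \<parallel>A'_{\<lambda>',v'}^{-1}\<parallel>. Projecting T_v onto T_v'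
  gives the reverse bound. As |A_{\<lambda>,v}| \<le> |A|_F + |\<lambda>| \<le> 2, the inverse has norm at least 1/2,
  so s \<le> d_P is absorbed into t and every error term is a polynomial in t \<le> \<epsilon>/7.2; the constant
  0.37 is where these polynomials fit under the factor 1 + \<epsilon>.\<close>

section \<open>The Hermitian inner product and orthogonal projections\<close>

lemma cinner_add_left: "cinner (x + y) z = cinner x z + cinner y z"
  by (simp add: cinner_def distrib_right sum.distrib)

lemma cinner_diff_left: "cinner (x - y) z = cinner x z - cinner y z"
  by (simp add: cinner_def left_diff_distrib sum_subtractf)

lemma cinner_smult_left: "cinner (c *s x) z = c * cinner x z"
  by (simp add: cinner_def sum_distrib_left mult.assoc)

lemma cinner_diff_right: "cinner z (x - y) = cinner z x - cinner z y"
  by (simp add: cinner_def right_diff_distrib sum_subtractf)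

lemma cinner_smult_right: "cinner z (c *s x) = cnj c * cinner z x"
  by (simp add: cinner_def sum_distrib_left mult.assoc mult.left_commute)

lemma cinner_commute: "cinner y x = cnj (cinner x y)"
  by (simp add: cinner_def mult.commute)

lemma cinner_zero_left [simp]: "cinner 0 x = 0"
  by (simp add: cinner_def)

lemma cinner_zero_right [simp]: "cinner x 0 = 0"
  by (simp add: cinner_def)

lemma norm_vec_power2: "(norm (x::complex^'n))\<^sup>2 = (\<Sum>i\<in>UNIV. (cmod (x$i))\<^sup>2)"
  by (simp add: norm_vec_def L2_set_def sum_nonneg)

lemma cinner_self: "cinner x x = complex_of_real ((norm x)\<^sup>2)"
  unfolding cinner_def norm_vec_power2 of_real_sum
  by (intro sum.cong refl) (rule complex_norm_square[symmetric])

lemma norm_vector_smult: "norm (c *s (x::complex^'n)) = cmod c * norm x"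
proof -
  have "(norm (c *s x))\<^sup>2 = (cmod c * norm x)\<^sup>2"
    unfolding norm_vec_power2 power_mult_distrib sum_distrib_left
    by (simp add: norm_mult power_mult_distrib)
  thus ?thesis by (simp add: power2_eq_iff_nonneg)
qed

lemma scaleR_eq_smult: "r *\<^sub>R (x::complex^'n) = complex_of_real r *s x"
proof (rule iffD2[OF vec_eq_iff], rule allI)
  fix i show "(r *\<^sub>R x) $ i = (complex_of_real r *s x) $ i"
    by (simp only: vector_scaleR_component vector_smult_component) (rule scaleR_conv_of_real)
qed

lemma proj_perp_add: "proj_perp v (x + y) = proj_perp v x + proj_perp v y"
  by (simp add: proj_perp_def vec_eq_iff cinner_add_left add_divide_distrib algebra_simps)

lemma proj_perp_diff: "proj_perp v (x - y) = proj_perp v x - proj_perp v y"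
  by (simp add: proj_perp_def vec_eq_iff cinner_diff_left diff_divide_distrib algebra_simps)

lemma proj_perp_smult: "proj_perp v (c *s x) = c *s proj_perp v x"
  by (simp add: proj_perp_def vec_eq_iff cinner_smult_left algebra_simps)

lemma diff_proj_perp: "x - proj_perp v x = (cinner x v / cinner v v) *s v"
  by (simp add: proj_perp_def)

lemma proj_perp_in_tangent: "v \<noteq> 0 \<Longrightarrow> proj_perp v x \<in> tangent v"
  by (simp add: tangent_def proj_perp_def cinner_diff_left cinner_smult_left cinner_self)

lemma norm_proj_perp_power2:
  assumes "v \<noteq> 0"
  shows "(norm (proj_perp v x))\<^sup>2 = (norm x)\<^sup>2 - (cmod (cinner x v))\<^sup>2 / (norm v)\<^sup>2"
proof -
  define N where "N = (norm v)\<^sup>2"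
  define p where "p = cinner x v"
  define t where "t = p / complex_of_real N"
  have N: "N > 0" using assms by (simp add: N_def)
  have vv: "cinner v v = complex_of_real N" by (simp add: N_def cinner_self)
  have "complex_of_real ((norm (proj_perp v x))\<^sup>2) = cinner (x - t *s v) (x - t *s v)"
    by (simp add: cinner_self proj_perp_def t_def p_def vv N_def)
  also have "\<dots> = cinner x x - cnj t * p - t * cnj p + t * cnj t * complex_of_real N"
    by (simp add: cinner_diff_left cinner_diff_right cinner_smult_left cinner_smult_right vv
        p_def cinner_commute[of x v] algebra_simps)
  also have "\<dots> = cinner x x - p * cnj p / complex_of_real N"
    using N by (simp add: t_def field_simps)
  also have "\<dots> = complex_of_real ((norm x)\<^sup>2 - (cmod p)\<^sup>2 / N)"
    by (simp only: complex_norm_square cinner_self of_real_diff of_real_divide)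
  finally show ?thesis by (simp only: of_real_eq_iff N_def p_def)
qed

lemma cinner_Cauchy_Schwarz: "cmod (cinner x y) \<le> norm x * norm y"
proof (cases "y = 0")
  case False
  have "(cmod (cinner x y))\<^sup>2 / (norm y)\<^sup>2 \<le> (norm x)\<^sup>2"
    using norm_proj_perp_power2[OF False, of x] by (metis diff_ge_0_iff_ge zero_le_power2)
  hence "(cmod (cinner x y))\<^sup>2 \<le> (norm x * norm y)\<^sup>2"
    using False by (simp add: divide_le_eq power_mult_distrib)
  thus ?thesis by (simp add: abs_le_square_iff[symmetric])
qed simp

lemma norm_proj_perp_le: "norm (proj_perp v x) \<le> norm x"
proof (cases "v = 0")
  case False
  then have "(norm (proj_perp v x))\<^sup>2 \<le> (norm x)\<^sup>2" using norm_proj_perp_power2[OF False, of x] by simp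
  thus ?thesis by (simp add: power2_le_iff_abs_le)
qed (simp add: proj_perp_def)

lemma norm_diff_proj_perp:
  assumes "v \<noteq> 0"
  shows "norm (x - proj_perp v x) = cmod (cinner x v) / norm v"
proof -
  have "norm (x - proj_perp v x) = cmod (cinner x v) / (norm v)\<^sup>2 * norm v"
    by (simp add: diff_proj_perp norm_vector_smult cinner_self norm_divide norm_power)
  thus ?thesis using assms by (simp add: power2_eq_square)
qed

lemma cmod_cinner_tangent_le: "x \<in> tangent p \<Longrightarrow> cmod (cinner x q) \<le> norm x * norm (proj_perp p q)"
  using cinner_Cauchy_Schwarz[of x "proj_perp p q"]
  by (simp add: tangent_def proj_perp_def cinner_diff_right cinner_smult_right)

lemma dP_commute: "dP v v' = dP v' v"
  by (simp add: dP_def cinner_commute[of v v'] mult.commute)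

lemma dP_bounds: "0 \<le> dP v' v \<and> dP v' v \<le> pi"
proof -
  have "cmod (cinner v' v) / (norm v' * norm v) \<le> 1"
    using cinner_Cauchy_Schwarz[of v' v] by (auto simp: divide_le_eq_1)
  moreover have "0 \<le> cmod (cinner v' v) / (norm v' * norm v)" by simp
  ultimately show ?thesis unfolding dP_def by (intro arccos_bounded) linarith+
qed

lemma sin_dP_nonneg: "0 \<le> sin (dP v' v)"
  using dP_bounds[of v' v] by (simp add: sin_ge_zero)

lemma sin_dP_le_dP: "sin (dP v' v) \<le> dP v' v"
  using dP_bounds[of v' v] by (simp add: sin_x_le_x)

lemma norm_proj_perp_eq_sin_dP:
  assumes v: "v \<noteq> 0" and v': "v' \<noteq> 0"
  shows "norm (proj_perp v v') = norm v' * sin (dP v' v)"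
proof -
  define c where "c = cmod (cinner v' v) / (norm v' * norm v)"
  have c: "0 \<le> c" "c \<le> 1"
    using cinner_Cauchy_Schwarz[of v' v] v v' by (simp_all add: c_def divide_le_eq_1)
  have "(norm v')\<^sup>2 * (1 - c\<^sup>2) = (norm v')\<^sup>2 - (cmod (cinner v' v))\<^sup>2 / (norm v)\<^sup>2"
    using v v' by (simp add: c_def power_divide power_mult_distrib field_simps)
  then have "(norm (proj_perp v v'))\<^sup>2 = (norm v')\<^sup>2 * (1 - c\<^sup>2)"
    using norm_proj_perp_power2[OF v, of v'] by simp
  also have "\<dots> = (norm v' * sin (dP v' v))\<^sup>2"
    using c power_le_one[OF c] by (simp add: dP_def c_def[symmetric] sin_arccos power_mult_distrib)
  finally show ?thesis
    using sin_dP_nonneg[of v' v] by (simp add: power2_eq_iff_nonneg)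
qed

lemma norm_proj_perp_change_normal:
  assumes p: "p \<noteq> 0" and q: "q \<noteq> 0"
  shows "norm (proj_perp q u) \<le> norm (proj_perp p u) + sin (dP p q) * norm u"
proof -
  define \<alpha> where "\<alpha> = cinner u p / cinner p p"
  have u: "proj_perp q u = proj_perp q (proj_perp p u) + \<alpha> *s proj_perp q p"
    by (simp add: proj_perp_def[of p u] proj_perp_diff proj_perp_smult \<alpha>_def)
  have "cmod \<alpha> = cmod (cinner u p) / (norm p)\<^sup>2"
    by (simp add: \<alpha>_def cinner_self norm_divide norm_power)
  also have "\<dots> \<le> norm u * norm p / (norm p)\<^sup>2"
    by (intro divide_right_mono cinner_Cauchy_Schwarz) simp
  also have "\<dots> = norm u / norm p"
    using p by (simp add: power2_eq_square)
  finally have \<alpha>: "cmod \<alpha> * norm p \<le> norm u"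
    using p by (simp add: le_divide_eq)
  have "norm (proj_perp q u) \<le> norm (proj_perp p u) + cmod \<alpha> * (norm p * sin (dP p q))"
    unfolding u norm_proj_perp_eq_sin_dP[OF q p, symmetric]
    by (metis add_mono norm_proj_perp_le norm_triangle_le norm_vector_smult order_refl)
  also have "\<dots> \<le> norm (proj_perp p u) + sin (dP p q) * norm u"
    using mult_right_mono[OF \<alpha> sin_dP_nonneg] by (simp add: algebra_simps)
  finally show ?thesis .
qed

lemma norm_le_norm_proj_perp_tangent:
  assumes v: "v \<noteq> 0" and w: "w \<noteq> 0" and x: "x \<in> tangent w"
  shows "norm x \<le> norm (proj_perp v x) + sin (dP v w) * norm x"
proof -
  have "norm x - norm (proj_perp v x) \<le> norm (x - proj_perp v x)"
    by (rule norm_triangle_ineq2)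
  also have "\<dots> = cmod (cinner x v) / norm v"
    by (rule norm_diff_proj_perp[OF v])
  also have "\<dots> \<le> norm x * norm (proj_perp w v) / norm v"
    by (intro divide_right_mono cmod_cinner_tangent_le[OF x]) simp
  also have "\<dots> = sin (dP v w) * norm x"
    using v by (simp add: norm_proj_perp_eq_sin_dP[OF w v])
  finally show ?thesis by simp
qed

section \<open>The restricted map A_{\<lambda>,v} and the norm of its inverse\<close>

lemma frob_nonneg: "0 \<le> frob A"
  by (simp add: frob_def sum_nonneg)

lemma norm_mult_vec_le_frob: "norm ((A::complex^'n^'n) *v x) \<le> frob A * norm x"
proof -
  have row: "(cmod (\<Sum>j\<in>UNIV. A$i$j * x$j))\<^sup>2 \<le> (\<Sum>j\<in>UNIV. (cmod (A$i$j))\<^sup>2) * (norm x)\<^sup>2" for i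
  proof -
    have "cmod (\<Sum>j\<in>UNIV. A$i$j * x$j) \<le> (\<Sum>j\<in>UNIV. cmod (A$i$j) * cmod (x$j))"
      using norm_sum[of "\<lambda>j. A$i$j * x$j" UNIV] by (simp add: norm_mult)
    hence "(cmod (\<Sum>j\<in>UNIV. A$i$j * x$j))\<^sup>2 \<le> (\<Sum>j\<in>UNIV. cmod (A$i$j) * cmod (x$j))\<^sup>2"
      by (rule power_mono[OF _ norm_ge_zero])
    also have "\<dots> \<le> (\<Sum>j\<in>UNIV. (cmod (A$i$j))\<^sup>2) * (\<Sum>j\<in>UNIV. (cmod (x$j))\<^sup>2)"
      by (rule Cauchy_Schwarz_ineq_sum)
    finally show ?thesis by (simp only: norm_vec_power2)
  qed
  have "(norm (A *v x))\<^sup>2 = (\<Sum>i\<in>UNIV. (cmod (\<Sum>j\<in>UNIV. A$i$j * x$j))\<^sup>2)"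
    by (simp only: norm_vec_power2 matrix_vector_mult_def vec_lambda_beta)
  also have "\<dots> \<le> (\<Sum>i\<in>UNIV. (\<Sum>j\<in>UNIV. (cmod (A$i$j))\<^sup>2) * (norm x)\<^sup>2)"
    by (rule sum_mono[OF row])
  also have "\<dots> = (frob A * norm x)\<^sup>2"
    unfolding sum_distrib_right[symmetric] frob_def power_mult_distrib by (simp add: sum_nonneg)
  finally show ?thesis
    by (rule power2_le_imp_le) (simp add: frob_nonneg)
qed

lemma norm_shift_le: "norm (A *v y - l *s y) \<le> (frob A + cmod l) * norm y"
proof -
  have "norm (A *v y - l *s y) \<le> norm (A *v y) + norm (l *s y)"
    by (rule norm_triangle_ineq4)
  also have "\<dots> \<le> frob A * norm y + cmod l * norm y"
    using norm_mult_vec_le_frob[of A y] by (simp add: norm_vector_smult)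
  finally show ?thesis by (simp add: algebra_simps)
qed

lemma eigenvalue_le_frob:
  assumes "A *v v = l *s v" and "v \<noteq> 0"
  shows "cmod l \<le> frob A"
  using norm_mult_vec_le_frob[of A v] assms by (simp add: norm_vector_smult)

lemma shift_add: "(A::complex^'n^'n) *v (x + y) - l *s (x + y) = (A *v x - l *s x) + (A *v y - l *s y)"
  by (simp add: matrix_vector_right_distrib vector_add_ldistrib)

lemma shift_diff: "(A::complex^'n^'n) *v (x - y) - l *s (x - y) = (A *v x - l *s x) - (A *v y - l *s y)"
  by (simp add: matrix_vector_mult_diff_distrib vector_ssub_ldistrib)

lemma shift_smult: "(A::complex^'n^'n) *v (c *s x) - l *s (c *s x) = c *s (A *v x - l *s x)"
proof -
  have "l *s (c *s x) = c *s (l *s x)" by (simp add: vec_eq_iff mult.left_commute)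
  thus ?thesis by (simp add: vector_scalar_commute vector_ssub_ldistrib)
qed

lemma shift_eigenvector:
  fixes A :: "complex^'n^'n"
  assumes "A *v v = l *s v"
  shows "A *v (c *s v) - l *s (c *s v) = 0"
  by (simp only: shift_smult assms) simp

lemma shift_perturb:
  "(A'::complex^'n^'n) *v x - l' *s x = (A *v z - l *s z) + (A *v (x - z) - l *s (x - z)) + ((A' - A) *v x - (l' - l) *s x)"
  by (simp add: matrix_vector_mult_diff_distrib vector_ssub_ldistrib
      matrix_vector_mult_diff_rdistrib vector_sub_rdistrib)

lemma Alv_add: "Alv A l v (x + y) = Alv A l v x + Alv A l v y"
  unfolding Alv_def shift_add by (rule proj_perp_add)

lemma Alv_diff: "Alv A l v (x - y) = Alv A l v x - Alv A l v y"
  unfolding Alv_def shift_diff by (rule proj_perp_diff)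

lemma Alv_smult: "Alv A l v (c *s x) = c *s Alv A l v x"
  unfolding Alv_def shift_smult by (rule proj_perp_smult)

lemma linear_Alv: "linear (Alv A l v)"
  by (rule linearI) (simp_all add: Alv_add scaleR_eq_smult Alv_smult)

lemma Alv_zero [simp]: "Alv A l v 0 = 0"
  using Alv_diff[of A l v 0 0] by simp

lemma Alv_in_tangent: "v \<noteq> 0 \<Longrightarrow> Alv A l v x \<in> tangent v"
  by (simp add: Alv_def proj_perp_in_tangent)

lemma norm_Alv_le: "norm (Alv A l v x) \<le> (frob A + cmod l) * norm x"
  unfolding Alv_def using norm_proj_perp_le norm_shift_le order_trans by blast

lemma subspace_tangent: "subspace (tangent v)"
  unfolding subspace_def tangent_def
  by (auto simp: cinner_add_left scaleR_eq_smult cinner_smult_left)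

lemma inv_opnorm_nonneg: "0 \<le> inv_opnorm A l v"
  unfolding inv_opnorm_def by (auto intro: Sup_upper)

lemma inv_opnorm_finite:
  assumes "inv_opnorm A l v \<noteq> \<infinity>"
  obtains m where "inv_opnorm A l v = ereal m" and "0 \<le> m"
  using assms inv_opnorm_nonneg[of A l v] by (cases "inv_opnorm A l v") auto

lemma norm_le_inv_opnorm_mult:
  assumes G: "inv_opnorm A l v = ereal m" and x: "x \<in> tangent v"
  shows "norm x \<le> m * norm (Alv A l v x)"
proof (cases "x = 0")
  case True
  with G show ?thesis using inv_opnorm_nonneg[of A l v] by simp
next
  case False
  let ?F = "Alv A l v" and ?T = "tangent v"
  have bij: "bij_betw ?F ?T ?T"
    using G unfolding inv_opnorm_def by (auto split: if_splits)
  then have inj: "inj_on ?F ?T" and Fx: "?F x \<in> ?T"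
    using x by (auto simp: bij_betw_def)
  have "0 \<in> ?T" by (simp add: tangent_def)
  then have "?F x \<noteq> 0"
    using inj_onD[OF inj _ x] False by fastforce
  moreover have "ereal (norm x / norm (?F x)) \<in>
      {0} \<union> {ereal (norm (inv_into ?T ?F y) / norm y) | y. y \<in> ?T \<and> y \<noteq> 0}"
    using Fx \<open>?F x \<noteq> 0\<close> inv_into_f_f[OF inj x] by force
  then have "ereal (norm x / norm (?F x)) \<le> inv_opnorm A l v"
    unfolding inv_opnorm_def using bij by (simp only: if_True) (rule Sup_upper)
  ultimately show ?thesis
    using G by (simp add: divide_le_eq mult.commute)
qed

lemma inv_opnorm_le:
  assumes v: "v \<noteq> 0" and C: "0 \<le> C"
    and bound: "\<And>x. x \<in> tangent v \<Longrightarrow> norm x \<le> C * norm (Alv A l v x)"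
  shows "inv_opnorm A l v \<le> ereal C"
proof -
  let ?F = "Alv A l v" and ?T = "tangent v"
  have inj: "inj_on ?F ?T"
  proof (rule inj_onI)
    fix x y assume "x \<in> ?T" "y \<in> ?T" "?F x = ?F y"
    then have "x - y \<in> ?T" and "?F (x - y) = 0"
      using subspace_diff[OF subspace_tangent] by (auto simp: Alv_diff)
    then show "x = y" using bound[of "x - y"] by simp
  qed
  have "?F ` ?T = ?T"
  proof (rule subspace_dim_equal)
    show "subspace (?F ` ?T)"
      by (rule linear_subspace_image[OF linear_Alv subspace_tangent])
    show "?F ` ?T \<subseteq> ?T" using Alv_in_tangent[OF v] by auto
    have "inj_on ?F (span ?T)"
      unfolding span_eq_iff[THEN iffD2, OF subspace_tangent] by (rule inj)
    then show "dim ?T \<le> dim (?F ` ?T)"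
      using dim_image_eq[OF linear_Alv[of A l v]] by simp
  qed (rule subspace_tangent)
  with inj have bij: "bij_betw ?F ?T ?T" by (simp add: bij_betw_def)
  have "norm (inv_into ?T ?F y) / norm y \<le> C" if "y \<in> ?T" "y \<noteq> 0" for y
  proof -
    have y: "y \<in> ?F ` ?T" using that \<open>?F ` ?T = ?T\<close> by simp
    have "norm (inv_into ?T ?F y) \<le> C * norm y"
      using bound[OF inv_into_into[OF y]] f_inv_into_f[OF y] by simp
    then show ?thesis using that by (simp add: divide_le_eq)
  qed
  then show ?thesis
    unfolding inv_opnorm_def using bij C by (auto intro!: Sup_least)
qed

lemma inv_opnorm_ge:
  assumes G: "inv_opnorm A l v = ereal m" and z: "z \<in> tangent v" "z \<noteq> 0"
  shows "1 \<le> m * (frob A + cmod l)"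
proof -
  have "0 \<le> m" using G inv_opnorm_nonneg[of A l v] by simp
  then have "norm z \<le> m * ((frob A + cmod l) * norm z)"
    using norm_le_inv_opnorm_mult[OF G z(1)] norm_Alv_le[of A l v z]
    by (meson mult_left_mono order_trans)
  then show ?thesis using z(2) by (simp add: mult.assoc[symmetric])
qed

lemma inv_opnorm_ge_half:
  assumes "inv_opnorm A l v = ereal m" and "z \<in> tangent v" "z \<noteq> 0"
    and "frob A = 1" and "A *v v = l *s v" "v \<noteq> 0"
  shows "1/2 \<le> m"
proof -
  have "0 \<le> m" using assms(1) inv_opnorm_nonneg[of A l v] by simp
  have "1 \<le> m * (frob A + cmod l)" by (rule inv_opnorm_ge[OF assms(1-3)])
  also have "\<dots> \<le> m * 2"
    using eigenvalue_le_frob[OF assms(5,6)] assms(4) \<open>0 \<le> m\<close> by (intro mult_left_mono) auto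
  finally show ?thesis by simp
qed

section \<open>Comparing the restricted maps of nearby triples\<close>

lemma norm_Alv_proj_perp_le_eigen:
  assumes v: "v \<noteq> 0" and v': "v' \<noteq> 0" and eig: "A *v v = l *s v" and x: "x \<in> tangent v'"
  shows "norm (Alv A l v (proj_perp v x)) \<le> norm (Alv A' l' v' x)
    + (frob (A' - A) + cmod (l' - l) + (frob A' + cmod l') * sin (dP v' v)) * norm x"
proof -
  define z where "z = proj_perp v x"
  define u where "u = A' *v x - l' *s x"
  define w where "w = (A' - A) *v x - (l' - l) *s x"
  have "A *v (x - z) - l *s (x - z) = 0"
    unfolding z_def diff_proj_perp by (rule shift_eigenvector[OF eig])
  then have shift_z: "A *v z - l *s z = u - w"
    using shift_perturb[of A' x l' A z l] by (simp add: u_def w_def)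
  have "norm (Alv A l v z) \<le> norm (proj_perp v u) + norm (proj_perp v w)"
    unfolding Alv_def shift_z proj_perp_diff by (rule norm_triangle_ineq4)
  also have "\<dots> \<le> norm (Alv A' l' v' x) + sin (dP v' v) * norm u + norm w"
    using norm_proj_perp_change_normal[OF v' v, of u] norm_proj_perp_le[of v w]
    by (simp add: Alv_def u_def)
  also have "\<dots> \<le> norm (Alv A' l' v' x) + sin (dP v' v) * ((frob A' + cmod l') * norm x)
      + (frob (A' - A) + cmod (l' - l)) * norm x"
    unfolding u_def w_def
    by (intro add_mono mult_left_mono norm_shift_le sin_dP_nonneg order_refl)
  finally show ?thesis by (simp add: z_def algebra_simps)
qed

text \<open>The correction x - z from z \<in> T_v to x = P_v' z is parallel to v', and A - \<lambda> maps v' to a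
  vector of size O(s |v'|) because it kills the v-component; both factors are O(s), whence s^2.\<close>

lemma norm_shift_proj_perp_diff_le:
  assumes v: "v \<noteq> 0" and v': "v' \<noteq> 0" and eig: "A *v v = l *s v" and z: "z \<in> tangent v"
  shows "norm (A *v (proj_perp v' z - z) - l *s (proj_perp v' z - z))
    \<le> (frob A + cmod l) * (sin (dP v' v))\<^sup>2 * norm z"
proof -
  define s where "s = sin (dP v' v)"
  define c where "c = frob A + cmod l"
  define \<gamma> where "\<gamma> = cinner z v' / cinner v' v'"
  have s: "0 \<le> s" and c: "0 \<le> c"
    by (simp_all add: s_def sin_dP_nonneg c_def frob_nonneg)
  have "A *v v' - l *s v' = (A *v proj_perp v v' - l *s proj_perp v v')
      + (A *v ((cinner v' v / cinner v v) *s v) - l *s ((cinner v' v / cinner v v) *s v))"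
    unfolding shift_add[symmetric] by (simp add: proj_perp_def)
  then have shift_v': "norm (A *v v' - l *s v') \<le> c * (norm v' * s)"
    using shift_eigenvector[OF eig] norm_shift_le[of A "proj_perp v v'" l] norm_proj_perp_eq_sin_dP[OF v v']
    by (simp add: c_def s_def)
  have "cmod \<gamma> = cmod (cinner z v') / (norm v')\<^sup>2"
    by (simp add: \<gamma>_def cinner_self norm_divide norm_power)
  also have "\<dots> \<le> norm z * (norm v' * s) / (norm v')\<^sup>2"
    using cmod_cinner_tangent_le[OF z, of v'] norm_proj_perp_eq_sin_dP[OF v v']
    by (intro divide_right_mono) (simp_all add: s_def)
  finally have \<gamma>: "cmod \<gamma> * norm v' \<le> norm z * s"
    using v' by (simp add: power2_eq_square field_simps)
  have "z - proj_perp v' z = \<gamma> *s v'"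
    unfolding \<gamma>_def by (rule diff_proj_perp)
  then have "proj_perp v' z - z = (- \<gamma>) *s v'"
    by (metis minus_diff_eq vector_smult_lneg)
  then have "norm (A *v (proj_perp v' z - z) - l *s (proj_perp v' z - z)) = cmod \<gamma> * norm (A *v v' - l *s v')"
    by (simp only: shift_smult norm_vector_smult norm_minus_cancel)
  also have "\<dots> = (cmod \<gamma> * norm v') * (norm (A *v v' - l *s v') / norm v')"
    using v' by simp
  also have "\<dots> \<le> (norm z * s) * (c * s)"
    using \<gamma> shift_v' v' s c by (rule_tac mult_mono) (simp_all add: divide_le_eq mult_ac)
  finally show ?thesis
    by (simp add: s_def c_def power2_eq_square mult_ac)
qed

lemma norm_Alv_proj_perp_le_perturbed:
  assumes v: "v \<noteq> 0" and v': "v' \<noteq> 0" and eig: "A *v v = l *s v" and z: "z \<in> tangent v"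
  shows "norm (Alv A' l' v' (proj_perp v' z)) \<le> norm (Alv A l v z)
    + ((frob A + cmod l) * (sin (dP v' v) + (sin (dP v' v))\<^sup>2) + frob (A' - A) + cmod (l' - l)) * norm z"
proof -
  define s where "s = sin (dP v' v)"
  define c where "c = frob A + cmod l"
  define x where "x = proj_perp v' z"
  define r where "r = A *v z - l *s z"
  define q where "q = A *v (x - z) - l *s (x - z)"
  define w where "w = (A' - A) *v x - (l' - l) *s x"
  have s: "0 \<le> s"
    by (simp add: s_def sin_dP_nonneg)
  have q: "norm q \<le> c * s\<^sup>2 * norm z"
    unfolding q_def x_def s_def c_def by (rule norm_shift_proj_perp_diff_le[OF v v' eig z])
  have "norm (proj_perp v' r) \<le> norm (Alv A l v z) + s * norm r"
    using norm_proj_perp_change_normal[OF v v', of r]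
    by (simp add: Alv_def r_def dP_commute[of v] s_def)
  also have "\<dots> \<le> norm (Alv A l v z) + s * (c * norm z)"
    unfolding r_def c_def using s by (intro add_left_mono mult_left_mono norm_shift_le)
  finally have r: "norm (proj_perp v' r) \<le> norm (Alv A l v z) + s * (c * norm z)" .
  have "norm w \<le> (frob (A' - A) + cmod (l' - l)) * norm x"
    unfolding w_def by (rule norm_shift_le)
  also have "\<dots> \<le> (frob (A' - A) + cmod (l' - l)) * norm z"
    unfolding x_def by (intro mult_left_mono norm_proj_perp_le) (simp add: frob_nonneg)
  finally have w: "norm w \<le> (frob (A' - A) + cmod (l' - l)) * norm z" .
  have decomp: "Alv A' l' v' x = proj_perp v' r + proj_perp v' q + proj_perp v' w"
    unfolding Alv_def shift_perturb[of A' x l' A z l] r_def[symmetric] q_def[symmetric] w_def[symmetric]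
    by (simp only: proj_perp_add)
  have "norm (Alv A' l' v' x) \<le> norm (proj_perp v' r) + norm q + norm w"
    unfolding decomp using norm_proj_perp_le[of v' q] norm_proj_perp_le[of v' w]
      norm_triangle_ineq[of "proj_perp v' r + proj_perp v' q" "proj_perp v' w"]
      norm_triangle_ineq[of "proj_perp v' r" "proj_perp v' q"]
    by linarith
  with r q w show ?thesis
    by (simp add: x_def s_def c_def algebra_simps)
qed

section \<open>Perturbation of the condition number\<close>

lemma norm_tangent_le_eigen:
  assumes fA: "frob A = 1" and fA': "frob A' = 1" and v: "v \<noteq> 0" and v': "v' \<noteq> 0"
    and eig: "A *v v = l *s v" and G: "inv_opnorm A l v = ereal m" and x: "x \<in> tangent v'"
  shows "(1 - sin (dP v' v)) * norm x \<le> m * (norm (Alv A' l' v' x)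
    + (frob (A' - A) + cmod (l' - l) + (2 + cmod (l' - l)) * sin (dP v' v)) * norm x)"
proof -
  define s z where "s = sin (dP v' v)" and "z = proj_perp v x"
  have m: "0 \<le> m" using G inv_opnorm_nonneg[of A l v] by simp
  have "frob A' + cmod l' \<le> 2 + cmod (l' - l)"
    using fA' eigenvalue_le_frob[OF eig v] fA norm_triangle_ineq2[of l' l] by simp
  then have "(frob A' + cmod l') * s * norm x \<le> (2 + cmod (l' - l)) * s * norm x"
    by (intro mult_right_mono) (simp_all add: s_def sin_dP_nonneg)
  then have "norm (Alv A l v z)
      \<le> norm (Alv A' l' v' x) + (frob (A' - A) + cmod (l' - l) + (2 + cmod (l' - l)) * s) * norm x"
    using norm_Alv_proj_perp_le_eigen[OF v v' eig x, of A' l'] by (simp add: z_def s_def algebra_simps)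
  from mult_left_mono[OF this m]
  have "norm z \<le> m * (norm (Alv A' l' v' x) + (frob (A' - A) + cmod (l' - l) + (2 + cmod (l' - l)) * s) * norm x)"
    using norm_le_inv_opnorm_mult[OF G proj_perp_in_tangent[OF v], of x] by (simp add: z_def)
  moreover have "norm x \<le> norm z + s * norm x"
    using norm_le_norm_proj_perp_tangent[OF v v' x] by (simp add: z_def s_def dP_commute[of v])
  ultimately show ?thesis
    unfolding s_def[symmetric] by (simp add: left_diff_distrib)
qed

lemma norm_tangent_le_perturbed:
  assumes fA: "frob A = 1" and v: "v \<noteq> 0" and v': "v' \<noteq> 0"
    and eig: "A *v v = l *s v" and G': "inv_opnorm A' l' v' = ereal m'" and z: "z \<in> tangent v"
  shows "(1 - sin (dP v' v)) * norm z \<le> m' * (norm (Alv A l v z)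
    + (2 * sin (dP v' v) + 2 * (sin (dP v' v))\<^sup>2 + frob (A' - A) + cmod (l' - l)) * norm z)"
proof -
  define s x where "s = sin (dP v' v)" and "x = proj_perp v' z"
  have m': "0 \<le> m'" using G' inv_opnorm_nonneg[of A' l' v'] by simp
  have "(frob A + cmod l) * (s + s\<^sup>2) * norm z \<le> 2 * (s + s\<^sup>2) * norm z"
    using fA eigenvalue_le_frob[OF eig v] by (intro mult_right_mono) (simp_all add: s_def sin_dP_nonneg)
  then have "norm (Alv A' l' v' x)
      \<le> norm (Alv A l v z) + (2 * s + 2 * s\<^sup>2 + frob (A' - A) + cmod (l' - l)) * norm z"
    using norm_Alv_proj_perp_le_perturbed[OF v v' eig z, of A' l'] by (simp add: x_def s_def algebra_simps)
  from mult_left_mono[OF this m']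
  have "norm x \<le> m' * (norm (Alv A l v z) + (2 * s + 2 * s\<^sup>2 + frob (A' - A) + cmod (l' - l)) * norm z)"
    using norm_le_inv_opnorm_mult[OF G' proj_perp_in_tangent[OF v'], of z] by (simp add: x_def)
  moreover have "norm z \<le> norm x + s * norm z"
    using norm_le_norm_proj_perp_tangent[OF v' v z] by (simp add: x_def s_def)
  ultimately show ?thesis
    unfolding s_def[symmetric] by (simp add: left_diff_distrib)
qed

text \<open>Below, m (a + b + d) is the quantity t of the header, and 5/36 = 1/7.2.\<close>

lemma upper_poly_bound:
  fixes t e :: real
  assumes "0 \<le> t" "t \<le> e * (5/36)" "0 < e" "e \<le> 37/100"
  shows "1 \<le> (1 + e) * (1 - 4*t - 2*t\<^sup>2)"
proof -
  have t2: "t\<^sup>2 \<le> t * (e*(5/36))" using mult_left_mono[OF assms(2) assms(1)] by (simp add: power2_eq_square)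
  have t3: "t * (e*(5/36)) \<le> (e*(5/36)) * (e*(5/36))" using assms by (simp add: mult_right_mono)
  have ee: "e * e \<le> (37/100) * e" using assms by (simp add: mult_right_mono)
  have eee: "e * (e * e) \<le> (37/100) * (e * e)" using mult_left_mono[OF ee, of e] assms by (simp add: algebra_simps)
  have "4*t + 2*t\<^sup>2 \<le> 4*(e*(5/36)) + 2*((e*(5/36))*(e*(5/36)))" using t2 t3 assms by linarith
  hence "(1 + e) * (1 - 4*(e*(5/36)) - 2*((e*(5/36))*(e*(5/36)))) \<le> (1 + e) * (1 - 4*t - 2*t\<^sup>2)"
    using assms by (intro mult_left_mono) auto
  moreover have "(1 + e) * (1 - 4*(e*(5/36)) - 2*((e*(5/36))*(e*(5/36))))
      = 1 + (4/9) * e - (385/648) * (e*e) - (25/648) * (e*(e*e))"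
    by (simp add: field_simps power2_eq_square)
  ultimately show ?thesis using ee eee assms by linarith
qed

lemma lower_poly_bound:
  fixes t e :: real
  assumes "0 \<le> t" "t \<le> e * (5/36)" "0 < e" "e \<le> 37/100"
  shows "1 + 2*t + 4*t\<^sup>2 \<le> (1 + e) * (1 - 2*t)"
proof -
  have et: "e * t \<le> (37/100) * e * (5/36)"
    using mult_left_mono[OF assms(2), of e] mult_right_mono[OF assms(4), of e] assms by simp
  have "t * t \<le> (t * e) * (5/36)" using mult_left_mono[OF assms(2) assms(1)] by simp
  then have "t * t \<le> (37/100) * e * (5/36) * (5/36)" using et by (simp add: mult.commute)
  moreover have "(1 + e) * (1 - 2*t) - (1 + 2*t + 4*t\<^sup>2) = e - 4*t - 4*(t*t) - 2*(e*t)"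
    by (simp add: algebra_simps power2_eq_square)
  ultimately show ?thesis using et assms by linarith
qed

lemma upper_error_le:
  fixes m s d a b :: real
  assumes "1/2 \<le> m" "0 \<le> s" "s \<le> d" "0 \<le> a" "0 \<le> b"
  shows "s + m * (a + b + (2 + b) * s) \<le> 4 * (m * (a + b + d)) + 2 * (m * (a + b + d))\<^sup>2"
proof -
  define t where "t = m * (a + b + d)"
  have t: "t = m * a + m * b + m * d" by (simp add: t_def algebra_simps)
  have ma: "0 \<le> m * a" and mb: "0 \<le> m * b" and ms: "0 \<le> m * s" using assms by simp_all
  have msd: "m * s \<le> m * d" using assms by (simp add: mult_left_mono)
  have sd: "s \<le> 2 * (m * d)" using assms mult_right_mono[of 1 "2 * m" d] by simp
  have "m * b * s \<le> (m * b) * (2 * (m * d))" using sd mb by (rule mult_left_mono)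
  also have "\<dots> \<le> t * (2 * t)" using t ma mb ms msd by (intro mult_mono) auto
  finally have "m * b * s \<le> 2 * t\<^sup>2" by (simp add: power2_eq_square)
  moreover have "s + m * (a + b + (2 + b) * s) = s + m * a + m * b + 2 * (m * s) + m * b * s"
    by (simp add: algebra_simps)
  ultimately show ?thesis unfolding t_def[symmetric] using t ma mb sd msd by linarith
qed

lemma lower_error_le:
  fixes m s d a b :: real
  assumes "1/2 \<le> m" "0 \<le> s" "s \<le> d" "0 \<le> a" "0 \<le> b"
  shows "m * (2 * s + 2 * s\<^sup>2 + a + b) \<le> 2 * (m * (a + b + d)) + 4 * (m * (a + b + d))\<^sup>2"
    and "s \<le> 2 * (m * (a + b + d))"
proof -
  define t where "t = m * (a + b + d)"
  have t: "t = m * a + m * b + m * d" by (simp add: t_def algebra_simps)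
  have ma: "0 \<le> m * a" and mb: "0 \<le> m * b" and ms: "0 \<le> m * s" using assms by simp_all
  have msd: "m * s \<le> m * d" using assms by (simp add: mult_left_mono)
  have "s \<le> 2 * (m * d)" using assms mult_right_mono[of 1 "2 * m" d] by simp
  then show s: "s \<le> 2 * (m * (a + b + d))" using t ma mb unfolding t_def[symmetric] by linarith
  have "m * s * s \<le> t * (2 * t)" using s t ma mb ms msd assms(2) by (intro mult_mono) (auto simp: t_def)
  then have "m * s * s \<le> 2 * t\<^sup>2" by (simp add: power2_eq_square)
  moreover have "m * (2 * s + 2 * s\<^sup>2 + a + b) = 2 * (m * s) + 2 * (m * s * s) + m * a + m * b"
    by (simp add: power2_eq_square algebra_simps)
  ultimately show "m * (2 * s + 2 * s\<^sup>2 + a + b) \<le> 2 * (m * (a + b + d)) + 4 * (m * (a + b + d))\<^sup>2"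
    unfolding t_def[symmetric] using t ma mb msd by linarith
qed

lemma upper_margin:
  fixes m s d a b e :: real
  assumes "1/2 \<le> m" "0 \<le> s" "s \<le> d" "0 \<le> a" "0 \<le> b"
    and "m * (a + b + d) \<le> e * (5/36)" "0 < e" "e \<le> 37/100"
  shows "1 \<le> (1 + e) * (1 - s - m * (a + b + (2 + b) * s))"
proof -
  have "1 \<le> (1 + e) * (1 - 4 * (m * (a + b + d)) - 2 * (m * (a + b + d))\<^sup>2)"
    using assms by (intro upper_poly_bound) simp_all
  also have "\<dots> \<le> (1 + e) * (1 - s - m * (a + b + (2 + b) * s))"
    using upper_error_le[OF assms(1-5)] assms(7) by (intro mult_left_mono) simp_all
  finally show ?thesis .
qed

lemma lower_margin:
  fixes m s d a b e :: real
  assumes "1/2 \<le> m" "0 \<le> s" "s \<le> d" "0 \<le> a" "0 \<le> b"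
    and "m * (a + b + d) \<le> e * (5/36)" "0 < e" "e \<le> 37/100"
  shows "1 + m * (2 * s + 2 * s\<^sup>2 + a + b) \<le> (1 + e) * (1 - s)"
proof -
  have "1 + m * (2 * s + 2 * s\<^sup>2 + a + b) \<le> 1 + 2 * (m * (a + b + d)) + 4 * (m * (a + b + d))\<^sup>2"
    using lower_error_le(1)[OF assms(1-5)] by simp
  also have "\<dots> \<le> (1 + e) * (1 - 2 * (m * (a + b + d)))"
    using assms by (intro lower_poly_bound) simp_all
  also have "\<dots> \<le> (1 + e) * (1 - s)"
    using lower_error_le(2)[OF assms(1-5)] assms(7) by (intro mult_left_mono) simp_all
  finally show ?thesis .
qed

lemma inv_opnorm_perturb_upper:
  assumes fA: "frob A = 1" and fA': "frob A' = 1" and v: "v \<noteq> 0" and v': "v' \<noteq> 0"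
    and eig: "A *v v = l *s v" and e: "0 < e" "e \<le> 37/100"
    and G: "inv_opnorm A l v = ereal m"
    and small: "m * (frob (A' - A) + cmod (l' - l) + dP v' v) \<le> e * (5/36)"
  shows "inv_opnorm A' l' v' \<le> ereal (m * (1 + e))"
proof -
  define s a b d where "s = sin (dP v' v)" and "a = frob (A' - A)" and "b = cmod (l' - l)"
    and "d = dP v' v"
  define k where "k = s + m * (a + b + (2 + b) * s)"
  have s: "0 \<le> s" "s \<le> d" and a: "0 \<le> a" and b: "0 \<le> b"
    by (simp_all add: s_def d_def a_def b_def sin_dP_nonneg sin_dP_le_dP frob_nonneg)
  have m: "0 \<le> m" using G inv_opnorm_nonneg[of A l v] by simp
  have "norm x \<le> m * (1 + e) * norm (Alv A' l' v' x)" if x: "x \<in> tangent v'" for x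
  proof (cases "\<exists>y \<in> tangent v. y \<noteq> 0")
    case False
    then have "proj_perp v x = 0" and "proj_perp v v' = 0"
      using proj_perp_in_tangent[OF v] by auto
    then show ?thesis
      using norm_le_norm_proj_perp_tangent[OF v v' x] norm_proj_perp_eq_sin_dP[OF v v'] v'
      by (simp add: dP_commute[of v])
  next
    case True
    then obtain y where y: "y \<in> tangent v" "y \<noteq> 0" by blast
    have margin: "1 \<le> (1 + e) * (1 - k)"
      unfolding k_def diff_diff_eq[symmetric]
      by (rule upper_margin[OF inv_opnorm_ge_half[OF G y fA eig v] s a b small[folded a_def b_def d_def] e])
    have "(1 - k) * norm x \<le> m * norm (Alv A' l' v' x)"
      using norm_tangent_le_eigen[OF fA fA' v v' eig G x, of l']
      by (simp add: k_def s_def a_def b_def algebra_simps)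
    from mult_left_mono[OF this, of "1 + e"] mult_right_mono[OF margin norm_ge_zero[of x]] e
    show ?thesis by (simp add: algebra_simps)
  qed
  then show ?thesis
    using m e by (intro inv_opnorm_le[OF v']) auto
qed

lemma inv_opnorm_perturb_lower:
  assumes fA: "frob A = 1" and v: "v \<noteq> 0" and v': "v' \<noteq> 0"
    and eig: "A *v v = l *s v" and e: "0 < e" "e \<le> 37/100"
    and G': "inv_opnorm A' l' v' = ereal m'"
    and small: "inv_opnorm A l v * ereal (frob (A' - A) + cmod (l' - l) + dP v' v) \<le> ereal (e * (5/36))"
  shows "inv_opnorm A l v \<le> ereal (m' * (1 + e))"
proof -
  define s a b d where "s = sin (dP v' v)" and "a = frob (A' - A)" and "b = cmod (l' - l)"
    and "d = dP v' v"
  define \<eta> where "\<eta> = 2 * s + 2 * s\<^sup>2 + a + b"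
  have s: "0 \<le> s" "s \<le> d" and a: "0 \<le> a" and b: "0 \<le> b"
    by (simp_all add: s_def d_def a_def b_def sin_dP_nonneg sin_dP_le_dP frob_nonneg)
  have \<eta>: "0 \<le> \<eta>" using s a b by (simp add: \<eta>_def)
  have m': "0 \<le> m'" using G' inv_opnorm_nonneg[of A' l' v'] by simp
  have "norm z \<le> m' * (1 + e) * norm (Alv A l v z)" if z: "z \<in> tangent v" for z
  proof (cases "z = 0")
    case False
    note z0 = False
    obtain \<mu> where \<mu>: "0 \<le> \<mu>" "\<eta> * norm z \<le> \<mu> * \<eta> * norm (Alv A l v z)"
      and margin: "1 + \<mu> * \<eta> \<le> (1 + e) * (1 - s)"
    proof (cases "inv_opnorm A l v = \<infinity>")
      case True
      have "a + b + d \<le> 0"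
      proof (rule ccontr)
        assume "\<not> a + b + d \<le> 0"
        then show False using small True by (simp add: a_def b_def d_def)
      qed
      then have "s = 0" and "a = 0" and "b = 0" using s a b by linarith+
      then have "\<eta> = 0" by (simp add: \<eta>_def)
      with \<open>s = 0\<close> show thesis using e by (intro that[of 0]) simp_all
    next
      case False
      then obtain m where G: "inv_opnorm A l v = ereal m" and m: "0 \<le> m"
        by (rule inv_opnorm_finite)
      have "1 + m * \<eta> \<le> (1 + e) * (1 - s)"
        unfolding \<eta>_def using inv_opnorm_ge_half[OF G z z0 fA eig v] s a b small G e
        by (intro lower_margin) (simp_all add: a_def b_def d_def)
      then show thesis
        using mult_left_mono[OF norm_le_inv_opnorm_mult[OF G z] \<eta>] m
        by (intro that[of m]) (simp_all add: mult_ac)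
    qed
    have "(1 - s) * norm z \<le> m' * norm (Alv A l v z) + m' * (\<eta> * norm z)"
      using norm_tangent_le_perturbed[OF fA v v' eig G' z]
      by (simp add: s_def a_def b_def \<eta>_def algebra_simps)
    also have "\<dots> \<le> m' * norm (Alv A l v z) * (1 + \<mu> * \<eta>)"
      using mult_left_mono[OF \<mu>(2) m'] by (simp add: algebra_simps)
    also have "\<dots> \<le> (1 - s) * (m' * (1 + e) * norm (Alv A l v z))"
      using mult_left_mono[OF margin, of "m' * norm (Alv A l v z)"] m' by (simp add: algebra_simps)
    finally have "(1 - s) * norm z \<le> (1 - s) * (m' * (1 + e) * norm (Alv A l v z))" .
    moreover have "0 < 1 - s"
    proof (rule ccontr)
      assume "\<not> 0 < 1 - s"
      then have "(1 + e) * (1 - s) \<le> 0" using e by (intro mult_nonneg_nonpos) auto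
      then show False using margin mult_nonneg_nonneg[OF \<mu>(1) \<eta>] by linarith
    qed
    ultimately show ?thesis by (simp add: mult_le_cancel_left_pos)
  qed simp
  then show ?thesis
    using m' e by (intro inv_opnorm_le[OF v]) auto
qed

theorem proposition4p1:
  fixes A A' :: "complex ^ 'n ^ 'n" and v v' :: "complex ^ 'n"
    and l l' :: complex and \<epsilon> :: real
  assumes "frob A = 1" and "frob A' = 1"
    and "v \<noteq> 0" and "v' \<noteq> 0"
    and "A *v v = l *s v"
    and "0 < \<epsilon>" and "\<epsilon> \<le> 0.37"
    and "mu A l v * ereal (frob (A' - A) + cmod (l' - l) + dP v' v) \<le> ereal (\<epsilon> / 7.2)"
  shows "ereal (1 / (1 + \<epsilon>)) * mu A l v \<le> mu A' l' v'
       \<and> mu A' l' v' \<le> ereal (1 + \<epsilon>) * mu A l v"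
proof -
  have mu: "mu A l v = inv_opnorm A l v" "mu A' l' v' = inv_opnorm A' l' v'"
    using assms(1,2) by (simp_all add: mu_def)
  have e: "0 < \<epsilon>" "\<epsilon> \<le> 37/100" using assms(6,7) by simp_all
  have small: "inv_opnorm A l v * ereal (frob (A' - A) + cmod (l' - l) + dP v' v) \<le> ereal (\<epsilon> * (5/36))"
    using assms(8) mu by simp
  have upper: "inv_opnorm A' l' v' \<le> ereal (1 + \<epsilon>) * inv_opnorm A l v"
  proof (cases "inv_opnorm A l v = \<infinity>")
    case False
    then obtain m where G: "inv_opnorm A l v = ereal m" by (rule inv_opnorm_finite)
    with small have "m * (frob (A' - A) + cmod (l' - l) + dP v' v) \<le> \<epsilon> * (5/36)" by simp
    from inv_opnorm_perturb_upper[OF assms(1-5) e G this] G show ?thesis by (simp add: mult.commute)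
  qed (use e in simp)
  have lower: "ereal (1 / (1 + \<epsilon>)) * inv_opnorm A l v \<le> inv_opnorm A' l' v'"
  proof (cases "inv_opnorm A' l' v' = \<infinity>")
    case False
    then obtain m' where G': "inv_opnorm A' l' v' = ereal m'" by (rule inv_opnorm_finite)
    have "inv_opnorm A l v \<le> ereal (m' * (1 + \<epsilon>))"
      by (rule inv_opnorm_perturb_lower[OF assms(1,3-5) e G' small])
    moreover obtain g where "inv_opnorm A l v = ereal g"
      using calculation inv_opnorm_nonneg[of A l v] by (cases "inv_opnorm A l v") auto
    ultimately show ?thesis using G' e by (simp add: divide_le_eq mult.commute)
  qed simp
  show ?thesis using upper lower mu by simp
qed

end
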